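(* Let $q=2^m$, let $k\in\mathbb{F}_q$ with $Tr(k)=1$, let $i\in\mathbb{F}_{q^2}\setminus\mathbb{F}_q$ with $i^2=i+k$, and let $\alpha=A+iB$, $\beta=C+iD$ with $A,B,C,D\in\mathbb{F}_q$ and $\alpha\beta\neq 0$. Then the following are equivalent: (i) $A=\frac{BC+BD+B}{D}$ with $D\neq 0$, $BD(B+D)\neq 0$, $kD^2+C^2+CD+1=0$, and $Tr\left(1+\frac{D}{B^2}\right)=0$; (ii) $\beta=\alpha^{q-1}\in\mathbb{F}_{q^2}\setminus\mathbb{F}_q$, $Tr\left(1+\frac{1}{\alpha^{q+1}}\right)=0$, and $\alpha+\alpha^q\neq\beta+\beta^q$.
   Context: $Tr:\mathbb{F}_q\to\mathbb{F}_2$ is the absolute trace $Tr(z)=z+z^2+\cdots+z^{2^{m-1}}$. *)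

theory Defs
  imports Main
begin

text \<open>The ambient field is a finite field of order q^2 = 2^(2m);
  F_q is its unique subfield of order q = 2^m, i.e. the fixed points of x |-> x^q.\<close>

definition subfield_Fq :: "nat \<Rightarrow> 'a::field set" where
  "subfield_Fq m = {x. x ^ (2 ^ m) = x}"

definition Tr :: "nat \<Rightarrow> 'a::field \<Rightarrow> 'a" where
  "Tr m z = (\<Sum>j<m. z ^ (2 ^ j))"

end

theory Submission
  imports Defs
begin

text \<open>Since \<open>i\<close> is a root of \<open>x\<^sup>2 + x + k\<close> outside \<open>F\<^sub>q\<close>, its conjugate
  \<open>i\<^sup>q\<close> is the other root \<open>i + 1\<close>, so conjugation is \<open>A + iB \<mapsto> A + iB + B\<close>. Hence
  \<open>\<alpha> + \<alpha>\<^sup>q = B\<close>, \<open>\<alpha>\<^sup>q\<^sup>+\<^sup>1 = A\<^sup>2 + AB + kB\<^sup>2\<close> and \<open>\<beta> \<in> F\<^sub>q\<close> iff \<open>D = 0\<close>. The equation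
  \<open>\<beta> = \<alpha>\<^sup>q\<^sup>-\<^sup>1\<close> means \<open>\<beta>\<alpha> = \<alpha>\<^sup>q\<close>; comparing coordinates in the \<open>F\<^sub>q\<close>-basis \<open>1, i\<close> gives
  two equations, the second of which solves for \<open>A\<close>. Substituting it into the first
  leaves \<open>kD\<^sup>2 + C\<^sup>2 + CD + 1 = 0\<close>, and then the norm becomes \<open>B\<^sup>2/D\<close>.\<close>

lemma char_two_if_card_UNIV_power_of_two:
  assumes "card (UNIV :: 'a::{field,finite} set) = 2 ^ n"
  shows "(2::'a) = 0"
proof -
  have "(\<Sum>y\<in>(UNIV::'a set). y + 1) = (\<Sum>y\<in>UNIV. y)"
    by (rule sum.reindex_bij_witness[of _ "\<lambda>y. y - 1" "\<lambda>y. y + 1"]) auto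
  then have "of_nat (card (UNIV :: 'a set)) = (0::'a)"
    by (simp add: sum.distrib)
  then have "(2::'a) ^ n = 0"
    using assms by simp
  then show ?thesis
    by simp
qed

lemma char_two_add_self:
  fixes x :: "'a::semiring_1"
  assumes "(2::'a) = 0"
  shows "x + x = 0"
  using assms by (metis mult_2 mult_zero_left)

lemma char_two_eq_iff_add_eq_0:
  fixes x y :: "'a::ring_1"
  assumes "(2::'a) = 0"
  shows "x = y \<longleftrightarrow> x + y = 0"
proof -
  have "- y = y"
    using assms char_two_add_self by (metis minus_unique)
  then show ?thesis
    by (metis eq_neg_iff_add_eq_0)
qed

lemma char_two_power_two_power_add:
  fixes x y :: "'a::comm_ring_1"
  assumes "(2::'a) = 0"
  shows "(x + y) ^ (2 ^ j) = x ^ (2 ^ j) + y ^ (2 ^ j)"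
proof (induction j)
  case 0
  then show ?case by simp
next
  case (Suc j)
  have "(x + y) ^ (2 ^ Suc j) = ((x + y) ^ (2 ^ j)) ^ 2"
    by (simp add: power_mult[symmetric] mult.commute)
  also have "\<dots> = (x ^ (2 ^ j)) ^ 2 + (y ^ (2 ^ j)) ^ 2 + 2 * (x ^ (2 ^ j) * y ^ (2 ^ j))"
    using Suc by (simp add: power2_eq_square algebra_simps)
  also have "\<dots> = x ^ (2 ^ Suc j) + y ^ (2 ^ Suc j)"
    using assms by (simp add: power_mult[symmetric] mult.commute)
  finally show ?case .
qed

lemma char_two_roots_of_artin_schreier:
  fixes i j k :: "'a::field"
  assumes "(2::'a) = 0" "i ^ 2 = i + k" "j ^ 2 = j + k" "j \<noteq> i"
  shows "j = i + 1"
proof -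
  have "(j + i) * (j + i + 1) = 2 * (j * i + j + i + k)"
    using assms(2,3) by algebra
  then have "j + i + 1 = 0"
    using assms(1,4) char_two_eq_iff_add_eq_0[OF assms(1)] by auto
  then show ?thesis
    using char_two_eq_iff_add_eq_0[OF assms(1)] by (simp add: add.assoc)
qed

text \<open>The elements \<open>a + i b\<close> with \<open>a\<^sup>q = a\<close> and \<open>b\<^sup>q = b\<close> model \<open>F\<^sub>q\<^sub>2\<close> in the basis \<open>1, i\<close>.\<close>

locale char_two_quadratic_extension =
  fixes q :: nat and k i :: "'a::field"
  assumes char_two: "(2::'a) = 0"
    and power_q_add: "(x + y :: 'a) ^ q = x ^ q + y ^ q"
    and q_pos: "0 < q"
    and k_fixed: "k ^ q = k"
    and i_square: "i ^ 2 = i + k"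
    and i_not_fixed: "i ^ q \<noteq> i"
begin

lemma eq_iff_add_eq_0: "x = y \<longleftrightarrow> x + y = (0::'a)"
  by (rule char_two_eq_iff_add_eq_0[OF char_two])

lemma power_q_i: "i ^ q = i + 1"
proof (rule char_two_roots_of_artin_schreier[OF char_two i_square _ i_not_fixed])
  have "(i ^ q) ^ 2 = (i ^ 2) ^ q"
    by (simp add: power_mult[symmetric] mult.commute)
  then show "(i ^ q) ^ 2 = i ^ q + k"
    by (simp add: i_square power_q_add k_fixed)
qed

lemma power_q_coords:
  assumes "a ^ q = a" "b ^ q = b"
  shows "(a + i * b) ^ q = a + i * b + b"
  using assms by (simp add: power_q_add power_mult_distrib power_q_i algebra_simps)

lemma coords_eq_0_iff:
  assumes "a ^ q = a" "b ^ q = b"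
  shows "a + i * b = 0 \<longleftrightarrow> a = 0 \<and> b = 0"
proof
  assume *: "a + i * b = 0"
  then have "(a + i * b) ^ q = 0"
    using q_pos by simp
  then have "a + i * b + b = 0"
    using assms by (simp only: power_q_coords)
  then show "a = 0 \<and> b = 0"
    using * by simp
qed simp

lemma power_q_coords_eq_iff:
  assumes "a ^ q = a" "b ^ q = b"
  shows "(a + i * b) ^ q = a + i * b \<longleftrightarrow> b = 0"
  using assms by (simp add: power_q_coords)

lemma add_power_q_coords:
  assumes "a ^ q = a" "b ^ q = b"
  shows "a + i * b + (a + i * b) ^ q = b"
proof -
  have "a + i * b + (a + i * b + b) = (a + i * b) + (a + i * b) + b"
    by (simp only: add.assoc)
  then show ?thesis
    using assms char_two_add_self[OF char_two] by (simp add: power_q_coords)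
qed

lemma power_Suc_q_coords:
  assumes "a ^ q = a" "b ^ q = b"
  shows "(a + i * b) ^ (q + 1) = a ^ 2 + a * b + k * b ^ 2"
proof -
  have "(a + i * b) ^ (q + 1) = (a + i * b + b) * (a + i * b)"
    by (simp only: power_add power_one_right power_q_coords[OF assms])
  also have "\<dots> = a ^ 2 + a * b + k * b ^ 2 + 2 * (i * a * b + i * b ^ 2)"
    using i_square by algebra
  finally show ?thesis
    using char_two by simp
qed

lemma eq_power_pred_q_iff:
  assumes "a ^ q = a" "b ^ q = b" "c ^ q = c" "d ^ q = d" "a + i * b \<noteq> 0"
  shows "c + i * d = (a + i * b) ^ (q - 1)
    \<longleftrightarrow> c * a + k * d * b + a + b = 0 \<and> c * b + d * a + d * b + b = 0"
proof -
  let ?x = "c * a + k * d * b + a + b" and ?y = "c * b + d * a + d * b + b"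
  have "(a + i * b) ^ q = (a + i * b) ^ (q - 1) * (a + i * b)"
    using q_pos by (metis Suc_diff_1 power_Suc2)
  then have "c + i * d = (a + i * b) ^ (q - 1)
      \<longleftrightarrow> (c + i * d) * (a + i * b) + (a + i * b) ^ q = 0"
    using assms(5) eq_iff_add_eq_0 by (metis mult_right_cancel)
  also have "(c + i * d) * (a + i * b) + (a + i * b) ^ q = ?x + i * ?y"
  proof -
    have "(c + i * d) * (a + i * b) + (a + i * b + b) = ?x + i * ?y"
      using i_square by algebra
    then show ?thesis
      using assms by (simp add: power_q_coords)
  qed
  also have "?x + i * ?y = 0 \<longleftrightarrow> ?x = 0 \<and> ?y = 0"
    using assms k_fixed
    by (intro coords_eq_0_iff) (simp_all add: power_q_add power_mult_distrib)
  finally show ?thesis .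
qed

end

lemma char_two_quadratic_extension_subfield_Fq:
  fixes k i :: "'a::{field,finite}"
  assumes "card (UNIV :: 'a set) = (2 ^ m) ^ 2"
    and "k \<in> subfield_Fq m" "i \<notin> subfield_Fq m" "i ^ 2 = i + k"
  shows "char_two_quadratic_extension (2 ^ m) k i"
proof -
  have "(2::'a) = 0"
    using assms(1) char_two_if_card_UNIV_power_of_two by (metis power_mult power_mult_distrib)
  then show ?thesis
    using assms(2-4) char_two_power_two_power_add
    by unfold_locales (auto simp: subfield_Fq_def)
qed

lemma char_two_coordinate_equations_iff:
  fixes A B C D k :: "'a::field"
  assumes char_two: "(2::'a) = 0" and D: "D \<noteq> 0" and AB: "A \<noteq> 0 \<or> B \<noteq> 0"
  shows "(C * A + k * D * B + A + B = 0 \<and> C * B + D * A + D * B + B = 0)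
    \<longleftrightarrow> A * D = B * C + B * D + B \<and> B \<noteq> 0 \<and> k * D ^ 2 + C ^ 2 + C * D + 1 = 0"
    (is "(?X1 = 0 \<and> ?X2 = 0) \<longleftrightarrow> ?lin \<and> B \<noteq> 0 \<and> ?E = 0")
proof -
  have "?lin \<longleftrightarrow> A * D + (B * C + B * D + B) = 0"
    by (rule char_two_eq_iff_add_eq_0[OF char_two])
  also have "A * D + (B * C + B * D + B) = ?X2"
    by (simp add: algebra_simps)
  finally have X2: "?X2 = 0 \<longleftrightarrow> ?lin" ..
  show ?thesis
  proof (cases ?lin)
    case lin: True
    have B: "B \<noteq> 0"
      using lin D AB by auto
    have "D * ?X1 = B * ?E + 2 * (B * C + B * D)"
      using lin by algebra
    then have "D * ?X1 = B * ?E"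
      using char_two by simp
    then have "?X1 = 0 \<longleftrightarrow> ?E = 0"
      using B D by (metis mult_eq_0_iff)
    then show ?thesis
      using X2 lin B by blast
  next
    case False
    then show ?thesis
      using X2 by blast
  qed
qed

lemma char_two_inverse_norm:
  fixes A B C D k :: "'a::field"
  assumes "(2::'a) = 0" "D \<noteq> 0" "A * D = B * C + B * D + B" "k * D ^ 2 + C ^ 2 + C * D + 1 = 0"
  shows "1 / (A ^ 2 + A * B + k * B ^ 2) = D / B ^ 2"
proof -
  have "D ^ 2 * (A ^ 2 + A * B + k * B ^ 2)
      = B ^ 2 * (k * D ^ 2 + C ^ 2 + C * D + 1) + B ^ 2 * D + 2 * (B ^ 2 * (D ^ 2 + C * D + C + D))"
    using assms(3) by algebra
  then have "D * (A ^ 2 + A * B + k * B ^ 2) = B ^ 2"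
    using assms(1,2,4) by (simp add: power2_eq_square)
  then have "D / B ^ 2 = D / (D * (A ^ 2 + A * B + k * B ^ 2))"
    by simp
  then show ?thesis
    using assms(2) by simp
qed

theorem proposition5:
  fixes m :: nat and k i A B C D :: "'a::{field,finite}"
  defines "q \<equiv> (2::nat) ^ m"
  defines "\<alpha> \<equiv> A + i * B"
  defines "\<beta> \<equiv> C + i * D"
  assumes card: "card (UNIV :: 'a set) = q ^ 2"
    and k: "k \<in> subfield_Fq m" and trk: "Tr m k = 1"
    and i: "i \<notin> subfield_Fq m" and i2: "i ^ 2 = i + k"
    and ABCD: "A \<in> subfield_Fq m" "B \<in> subfield_Fq m" "C \<in> subfield_Fq m" "D \<in> subfield_Fq m"
    and nz: "\<alpha> * \<beta> \<noteq> 0"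
  shows "(D \<noteq> 0 \<and> A = (B * C + B * D + B) / D \<and> B * D * (B + D) \<noteq> 0
           \<and> k * D ^ 2 + C ^ 2 + C * D + 1 = 0 \<and> Tr m (1 + D / B ^ 2) = 0)
     \<longleftrightarrow> (\<beta> = \<alpha> ^ (q - 1) \<and> \<beta> \<notin> subfield_Fq m
           \<and> Tr m (1 + 1 / \<alpha> ^ (q + 1)) = 0 \<and> \<alpha> + \<alpha> ^ q \<noteq> \<beta> + \<beta> ^ q)"
proof -
  interpret char_two_quadratic_extension q k i
    using char_two_quadratic_extension_subfield_Fq card k i i2 unfolding q_def by blast
  have fixed: "\<And>x. x \<in> subfield_Fq m \<longleftrightarrow> x ^ q = x"
    by (simp add: subfield_Fq_def q_def)
  have ABCD_fixed: "A ^ q = A" "B ^ q = B" "C ^ q = C" "D ^ q = D"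
    using ABCD fixed by auto
  have AB: "A \<noteq> 0 \<or> B \<noteq> 0" and \<alpha>: "A + i * B \<noteq> 0"
    using nz unfolding \<alpha>_def by auto
  have \<beta>_notin: "\<beta> \<notin> subfield_Fq m \<longleftrightarrow> D \<noteq> 0"
    unfolding fixed \<beta>_def using power_q_coords_eq_iff[OF ABCD_fixed(3,4)] by simp
  have traces: "\<alpha> + \<alpha> ^ q \<noteq> \<beta> + \<beta> ^ q \<longleftrightarrow> B \<noteq> D"
    unfolding \<alpha>_def \<beta>_def using add_power_q_coords ABCD_fixed by simp
  show ?thesis
  proof (cases "D = 0")
    case True
    then show ?thesis
      using \<beta>_notin by simp
  next
    case D: False
    let ?E = "k * D ^ 2 + C ^ 2 + C * D + 1"
    have power_pred: "\<beta> = \<alpha> ^ (q - 1) \<longleftrightarrow> A * D = B * C + B * D + B \<and> B \<noteq> 0 \<and> ?E = 0"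
      unfolding \<alpha>_def \<beta>_def eq_power_pred_q_iff[OF ABCD_fixed \<alpha>]
      by (rule char_two_coordinate_equations_iff[OF char_two D AB])
    have norm: "A * D = B * C + B * D + B \<Longrightarrow> ?E = 0 \<Longrightarrow> 1 / \<alpha> ^ (q + 1) = D / B ^ 2"
      unfolding \<alpha>_def power_Suc_q_coords[OF ABCD_fixed(1,2)]
      by (rule char_two_inverse_norm[OF char_two D])
    then have trace: "A * D = B * C + B * D + B \<Longrightarrow> ?E = 0 \<Longrightarrow>
        Tr m (1 + 1 / \<alpha> ^ (q + 1)) = 0 \<longleftrightarrow> Tr m (1 + D / B ^ 2) = 0"
      by simp
    have A: "A = (B * C + B * D + B) / D \<longleftrightarrow> A * D = B * C + B * D + B"
      using D by (auto simp: field_simps)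
    have BD: "B * D * (B + D) \<noteq> 0 \<longleftrightarrow> B \<noteq> 0 \<and> B \<noteq> D"
      using D eq_iff_add_eq_0[of B D] by auto
    show ?thesis
      unfolding power_pred \<beta>_notin traces A BD using D trace by blast
  qed
qed

end
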